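(* Let $(\mu^{(n)},\nu^{(n)})_{n\in\mathbb N}$ be a sequence in $\mathcal M_{\mathrm{tem}}(\mathbb R)^2$ (or in $\mathcal M_{\mathrm{rap}}(\mathbb R)^2$) converging to $(\mu,\nu)$, and assume $R(\mu^{(n)})\le L(\nu^{(n)})$ for all $n$. Then $$R(\mu)\le\liminf_{n\to\infty}R(\mu^{(n)})\le\limsup_{n\to\infty}L(\nu^{(n)})\le L(\nu).$$
   Context: $\phi_\lambda(x)=e^{-\lambda|x|}$. $\mathcal M_{\mathrm{tem}}(\mathbb R)$: nonnegative Radon measures with $\int\phi_\lambda d\mu<\infty$ for all $\lambda>0$, with $\mu_n\to\mu$ iff $\int\varphi d\mu_n\to\int\varphi d\mu$ for every continuous $\varphi$ such that, for some $\lambda>0$, $\sup|\varphi|/\phi_\lambda<\infty$ and $\varphi/\phi_\lambda$ has finite limits at $\pm\infty$. $\mathcal M_{\mathrm{rap}}(\mathbb R)$: those with $\int\phi_{-\lambda}d\mu<\infty$ for all $\lambda>0$, with $\mu_n\to\mu$ iff weak convergence as finite measures and $\sup_n\int\phi_{-\lambda}d\mu_n<\infty$ for all $\lambda>0$. ${\rm supp}(\mu)=\{x:\mu(B_\varepsilon(x))>0\ \forall\varepsilon>0\}$, $R(\mu)=\sup{\rm supp}(\mu)$, $L(\mu)=\inf{\rm supp}(\mu)$ in $\bar{\mathbb R}$ (with $\sup\emptyset=-\infty$, $\inf\emptyset=+\infty$). *)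

theory Defs
  imports "HOL-Analysis.Analysis"
begin

definition phiw :: "real \<Rightarrow> real \<Rightarrow> real" where
  "phiw l x = exp (- l * \<bar>x\<bar>)"

definition radon :: "real measure \<Rightarrow> bool" where
  "radon \<mu> \<longleftrightarrow> sets \<mu> = sets borel \<and> (\<forall>K. compact K \<longrightarrow> emeasure \<mu> K < \<infinity>)"

definition Mtem :: "real measure set" where
  "Mtem = {\<mu>. radon \<mu> \<and> (\<forall>l>0. (\<integral>\<^sup>+x. ennreal (phiw l x) \<partial>\<mu>) < \<infinity>)}"

definition Mrap :: "real measure set" where
  "Mrap = {\<mu>. radon \<mu> \<and> (\<forall>l>0. (\<integral>\<^sup>+x. ennreal (phiw (- l) x) \<partial>\<mu>) < \<infinity>)}"

definition tem_test :: "(real \<Rightarrow> real) \<Rightarrow> bool" where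
  "tem_test f \<longleftrightarrow> continuous_on UNIV f \<and>
     (\<exists>l>0. (\<exists>C. \<forall>x. \<bar>f x\<bar> \<le> C * phiw l x) \<and>
            (\<exists>a. ((\<lambda>x. f x / phiw l x) \<longlongrightarrow> a) at_top) \<and>
            (\<exists>b. ((\<lambda>x. f x / phiw l x) \<longlongrightarrow> b) at_bot))"

definition conv_tem :: "(nat \<Rightarrow> real measure) \<Rightarrow> real measure \<Rightarrow> bool" where
  "conv_tem \<mu>s \<mu> \<longleftrightarrow>
     (\<forall>f. tem_test f \<longrightarrow> (\<lambda>n. integral\<^sup>L (\<mu>s n) f) \<longlonglongrightarrow> integral\<^sup>L \<mu> f)"

definition conv_rap :: "(nat \<Rightarrow> real measure) \<Rightarrow> real measure \<Rightarrow> bool" where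
  "conv_rap \<mu>s \<mu> \<longleftrightarrow>
     (\<forall>f::real\<Rightarrow>real. continuous_on UNIV f \<and> bounded (range f) \<longrightarrow>
          (\<lambda>n. integral\<^sup>L (\<mu>s n) f) \<longlonglongrightarrow> integral\<^sup>L \<mu> f) \<and>
     (\<forall>l>0. \<exists>C::ennreal. C < \<infinity> \<and> (\<forall>n. (\<integral>\<^sup>+x. ennreal (phiw (- l) x) \<partial>(\<mu>s n)) \<le> C))"

definition supp :: "real measure \<Rightarrow> real set" where
  "supp \<mu> = {x. \<forall>e>0. emeasure \<mu> (ball x e) > 0}"

definition Rsup :: "real measure \<Rightarrow> ereal" where
  "Rsup \<mu> = Sup (ereal ` supp \<mu>)"

definition Linf :: "real measure \<Rightarrow> ereal" where
  "Linf \<mu> = Inf (ereal ` supp \<mu>)"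

end

theory Submission
  imports Defs
begin

text \<open>Tent functions are continuous, bounded and compactly supported, hence admissible test
  functions in both topologies. A point x of the support of the limit is detected by the tent of
  height e at x: its integral against the limit is positive, hence so are its integrals against
  the approximating measures for large n, and these vanish unless the support of the n-th
  measure meets the closed e-ball around x. So supports cannot suddenly appear in the limit:
  R is lower and L upper semicontinuous, and the middle inequality is inherited from
  R(\<mu>s n) \<le> L(\<nu>s n).\<close>

definition tent :: "real \<Rightarrow> real \<Rightarrow> real \<Rightarrow> real" where
  "tent x e y = max 0 (e - \<bar>y - x\<bar>)"

definition tent_conv :: "(nat \<Rightarrow> real measure) \<Rightarrow> real measure \<Rightarrow> bool" where
  "tent_conv Ms M \<longleftrightarrow>
     (\<forall>x e. 0 < e \<longrightarrow> (\<lambda>n. integral\<^sup>L (Ms n) (tent x e)) \<longlonglongrightarrow> integral\<^sup>L M (tent x e))"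

lemma continuous_on_tent: "continuous_on UNIV (tent x e)"
  unfolding tent_def by (intro continuous_intros)

lemma tent_nonneg: "0 \<le> tent x e y"
  unfolding tent_def by simp

lemma tent_le: "tent x e y \<le> max 0 e"
  unfolding tent_def by auto

lemma tent_eq_0: "y \<notin> cball x e \<Longrightarrow> tent x e y = 0"
  unfolding tent_def by (auto simp: dist_real_def)

lemma bounded_range_tent: "bounded (range (tent x e))"
proof -
  have "\<forall>y. norm (tent x e y) \<le> max 0 e" using tent_le tent_nonneg by simp
  then show ?thesis unfolding bounded_iff by blast
qed

lemma tem_test_tent:
  assumes e: "0 < e"
  shows "tem_test (tent x e)"
proof -
  have "\<bar>tent x e y\<bar> \<le> e * exp (\<bar>x\<bar> + e) * phiw 1 y" for y
  proof (cases "y \<in> cball x e")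
    case True
    then have "\<bar>y\<bar> \<le> \<bar>x\<bar> + e" by (auto simp: dist_real_def)
    then have "1 \<le> exp (\<bar>x\<bar> + e) * phiw 1 y" by (simp add: phiw_def exp_add[symmetric])
    then have "e \<le> e * exp (\<bar>x\<bar> + e) * phiw 1 y" using e by (simp add: mult.assoc)
    moreover have "\<bar>tent x e y\<bar> \<le> e" using e tent_le[of x e y] tent_nonneg[of x e y] by simp
    ultimately show ?thesis by linarith
  qed (use e in \<open>simp add: tent_eq_0 phiw_def\<close>)
  moreover have "((\<lambda>y. tent x e y / phiw 1 y) \<longlongrightarrow> 0) at_top"
    using eventually_gt_at_top[of "x + e"]
    by (intro tendsto_eventually, eventually_elim) (simp add: tent_eq_0 dist_real_def)
  moreover have "((\<lambda>y. tent x e y / phiw 1 y) \<longlongrightarrow> 0) at_bot"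
    using eventually_gt_at_bot[of "x - e"]
    by (intro tendsto_eventually, eventually_elim) (simp add: tent_eq_0 dist_real_def)
  ultimately show ?thesis
    unfolding tem_test_def using continuous_on_tent zero_less_one by blast
qed

lemma conv_tem_imp_tent_conv: "conv_tem Ms M \<Longrightarrow> tent_conv Ms M"
  unfolding conv_tem_def tent_conv_def using tem_test_tent by blast

lemma conv_rap_imp_tent_conv: "conv_rap Ms M \<Longrightarrow> tent_conv Ms M"
  unfolding conv_rap_def tent_conv_def using continuous_on_tent bounded_range_tent by blast

lemma
  assumes "sets M = sets borel" and "0 < e"
  shows integral_tent_eq_nn_integral:
      "integral\<^sup>L M (tent x e) = enn2real (\<integral>\<^sup>+y. tent x e y \<partial>M)"
    and nn_integral_tent_le: "(\<integral>\<^sup>+y. tent x e y \<partial>M) \<le> ennreal e * emeasure M (cball x e)"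
    and nn_integral_tent_ge: "ennreal (e/2) * emeasure M (ball x (e/2)) \<le> (\<integral>\<^sup>+y. tent x e y \<partial>M)"
proof -
  have meas: "tent x e \<in> borel_measurable M"
    using borel_measurable_continuous_onI[OF continuous_on_tent] assms(1)
    by (simp cong: measurable_cong_sets)
  show "integral\<^sup>L M (tent x e) = enn2real (\<integral>\<^sup>+y. tent x e y \<partial>M)"
    by (rule integral_eq_nn_integral[OF meas]) (simp add: tent_nonneg)
  have balls: "cball x e \<in> sets M" "ball x (e/2) \<in> sets M" using assms(1) by auto
  have "(\<integral>\<^sup>+y. tent x e y \<partial>M) \<le> (\<integral>\<^sup>+y. ennreal e * indicator (cball x e) y \<partial>M)"
    using \<open>0 < e\<close> tent_le[of x e]
    by (intro nn_integral_mono) (auto simp: tent_eq_0 indicator_def ennreal_leI)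
  then show "(\<integral>\<^sup>+y. tent x e y \<partial>M) \<le> ennreal e * emeasure M (cball x e)"
    using balls by (simp add: nn_integral_cmult_indicator)
  have "(\<integral>\<^sup>+y. ennreal (e/2) * indicator (ball x (e/2)) y \<partial>M) \<le> (\<integral>\<^sup>+y. tent x e y \<partial>M)"
    by (intro nn_integral_mono)
      (auto simp: tent_def indicator_def dist_real_def abs_minus_commute split: split_max
        intro!: ennreal_leI)
  then show "ennreal (e/2) * emeasure M (ball x (e/2)) \<le> (\<integral>\<^sup>+y. tent x e y \<partial>M)"
    using balls by (simp add: nn_integral_cmult_indicator)
qed

lemma emeasure_cball_eq_0_if_disjoint_supp:
  assumes M: "sets M = sets borel" and disj: "cball x e \<inter> supp M = {}"
  shows "emeasure M (cball x e) = 0"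
proof -
  have "\<forall>y\<in>cball x e. \<exists>r>0. emeasure M (ball y r) = 0"
  proof
    fix y assume "y \<in> cball x e"
    then have "y \<notin> supp M" using disj by blast
    then show "\<exists>r>0. emeasure M (ball y r) = 0" unfolding supp_def by (auto simp: not_less)
  qed
  then obtain r where r: "\<And>y. y \<in> cball x e \<Longrightarrow> r y > 0 \<and> emeasure M (ball y (r y)) = 0"
    by metis
  have "cball x e \<subseteq> (\<Union>y\<in>cball x e. ball y (r y))" using r by force
  then obtain T where T: "T \<subseteq> cball x e" "finite T" "cball x e \<subseteq> (\<Union>y\<in>T. ball y (r y))"
    by (rule compactE_image[OF compact_cball open_ball]) blast+
  have open_sets: "open U \<Longrightarrow> U \<in> sets M" for U
    using M borel_open by simp
  have "emeasure M (cball x e) \<le> emeasure M (\<Union>y\<in>T. ball y (r y))"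
    by (intro emeasure_mono[OF T(3)] open_sets) auto
  also have "\<dots> \<le> (\<Sum>y\<in>T. emeasure M (ball y (r y)))"
    by (intro emeasure_subadditive_finite[OF T(2)]) (auto intro: open_sets)
  also have "\<dots> = 0" using T(1) r by (intro sum.neutral) auto
  finally show ?thesis by simp
qed

lemma integral_tent_eq_0_if_disjoint_supp:
  assumes "sets M = sets borel" and "0 < e" and "cball x e \<inter> supp M = {}"
  shows "integral\<^sup>L M (tent x e) = 0"
  using nn_integral_tent_le[OF assms(1,2), of x] emeasure_cball_eq_0_if_disjoint_supp[OF assms(1,3)]
  by (simp add: integral_tent_eq_nn_integral[OF assms(1,2)])

lemma integral_tent_pos_if_in_supp:
  assumes M: "radon M" and e: "0 < e" and x: "x \<in> supp M"
  shows "0 < integral\<^sup>L M (tent x e)"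
proof -
  have sets: "sets M = sets borel" using M unfolding radon_def by simp
  have "0 < ennreal (e/2) * emeasure M (ball x (e/2))"
    using x e by (simp add: supp_def ennreal_zero_less_mult_iff)
  also have "\<dots> \<le> (\<integral>\<^sup>+y. tent x e y \<partial>M)" by (rule nn_integral_tent_ge[OF sets e])
  finally have pos: "0 < (\<integral>\<^sup>+y. tent x e y \<partial>M)" .
  have "(\<integral>\<^sup>+y. tent x e y \<partial>M) \<le> ennreal e * emeasure M (cball x e)"
    by (rule nn_integral_tent_le[OF sets e])
  also have "\<dots> < \<infinity>" using M by (simp add: radon_def ennreal_mult_less_top)
  finally show ?thesis
    using pos by (simp add: integral_tent_eq_nn_integral[OF sets e] enn2real_positive_iff)
qed

lemma tent_conv_imp_eventually_supp_near:
  assumes sets: "\<And>n. sets (Ms n) = sets borel" and M: "radon M" and conv: "tent_conv Ms M"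
    and x: "x \<in> supp M" and e: "0 < e"
  shows "eventually (\<lambda>n. \<exists>y\<in>supp (Ms n). \<bar>y - x\<bar> \<le> e) sequentially"
proof -
  have "(\<lambda>n. integral\<^sup>L (Ms n) (tent x e)) \<longlonglongrightarrow> integral\<^sup>L M (tent x e)"
    using conv e unfolding tent_conv_def by blast
  then have "eventually (\<lambda>n. 0 < integral\<^sup>L (Ms n) (tent x e)) sequentially"
    using integral_tent_pos_if_in_supp[OF M e x] by (rule order_tendstoD(1))
  then show ?thesis
  proof eventually_elim
    case (elim n)
    then have "cball x e \<inter> supp (Ms n) \<noteq> {}"
      using integral_tent_eq_0_if_disjoint_supp[OF sets e] by force
    then show ?case by (auto simp: dist_real_def abs_minus_commute)
  qed
qed

lemma Rsup_le_liminf: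
  assumes "\<And>n. sets (Ms n) = sets borel" and "radon M" and "tent_conv Ms M"
  shows "Rsup M \<le> liminf (\<lambda>n. Rsup (Ms n))"
  unfolding Rsup_def
proof (rule Sup_least, safe)
  fix x assume x: "x \<in> supp M"
  show "ereal x \<le> liminf (\<lambda>n. Sup (ereal ` supp (Ms n)))"
    unfolding le_Liminf_iff
  proof (intro allI impI)
    fix y assume "y < ereal x"
    then obtain q :: real where q: "y < ereal q" "q < x"
      using ereal_dense2 by (metis less_ereal.simps(1))
    have "eventually (\<lambda>n. \<exists>z\<in>supp (Ms n). \<bar>z - x\<bar> \<le> (x - q)/2) sequentially"
      using q(2) by (intro tent_conv_imp_eventually_supp_near[OF assms x]) simp
    then show "eventually (\<lambda>n. y < Sup (ereal ` supp (Ms n))) sequentially"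
    proof eventually_elim
      case (elim n)
      then obtain z where z: "z \<in> supp (Ms n)" "\<bar>z - x\<bar> \<le> (x - q)/2" by blast
      have "y < ereal q" by (rule q(1))
      also have "ereal q < ereal z" using q(2) abs_le_D2[OF z(2)] by simp
      also have "\<dots> \<le> Sup (ereal ` supp (Ms n))" using z(1) by (intro Sup_upper) auto
      finally show ?case .
    qed
  qed
qed

lemma limsup_le_Linf:
  assumes "\<And>n. sets (Ms n) = sets borel" and "radon M" and "tent_conv Ms M"
  shows "limsup (\<lambda>n. Linf (Ms n)) \<le> Linf M"
  unfolding Linf_def
proof (rule Inf_greatest, safe)
  fix x assume x: "x \<in> supp M"
  show "limsup (\<lambda>n. Inf (ereal ` supp (Ms n))) \<le> ereal x"
    unfolding Limsup_le_iff
  proof (intro allI impI)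
    fix y assume "ereal x < y"
    then obtain q :: real where q: "ereal q < y" "x < q"
      using ereal_dense2 by (metis less_ereal.simps(1))
    have "eventually (\<lambda>n. \<exists>z\<in>supp (Ms n). \<bar>z - x\<bar> \<le> (q - x)/2) sequentially"
      using q(2) by (intro tent_conv_imp_eventually_supp_near[OF assms x]) simp
    then show "eventually (\<lambda>n. Inf (ereal ` supp (Ms n)) < y) sequentially"
    proof eventually_elim
      case (elim n)
      then obtain z where z: "z \<in> supp (Ms n)" "\<bar>z - x\<bar> \<le> (q - x)/2" by blast
      have "Inf (ereal ` supp (Ms n)) \<le> ereal z" using z(1) by (intro Inf_lower) auto
      also have "ereal z < ereal q" using q(2) abs_le_D1[OF z(2)] by simp
      also have "\<dots> < y" by (rule q(1))
      finally show ?case .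
    qed
  qed
qed

theorem corollary5p2:
  fixes \<mu>s \<nu>s :: "nat \<Rightarrow> real measure" and \<mu> \<nu> :: "real measure"
  assumes conv: "((\<forall>n. \<mu>s n \<in> Mtem \<and> \<nu>s n \<in> Mtem) \<and> \<mu> \<in> Mtem \<and> \<nu> \<in> Mtem
                   \<and> conv_tem \<mu>s \<mu> \<and> conv_tem \<nu>s \<nu>)
               \<or> ((\<forall>n. \<mu>s n \<in> Mrap \<and> \<nu>s n \<in> Mrap) \<and> \<mu> \<in> Mrap \<and> \<nu> \<in> Mrap
                   \<and> conv_rap \<mu>s \<mu> \<and> conv_rap \<nu>s \<nu>)"
    and order: "\<And>n. Rsup (\<mu>s n) \<le> Linf (\<nu>s n)"
  shows "Rsup \<mu> \<le> liminf (\<lambda>n. Rsup (\<mu>s n))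
       \<and> liminf (\<lambda>n. Rsup (\<mu>s n)) \<le> limsup (\<lambda>n. Linf (\<nu>s n))
       \<and> limsup (\<lambda>n. Linf (\<nu>s n)) \<le> Linf \<nu>"
proof -
  have radon: "\<And>n. radon (\<mu>s n)" "\<And>n. radon (\<nu>s n)" "radon \<mu>" "radon \<nu>"
    using conv unfolding Mtem_def Mrap_def by auto
  then have sets: "\<And>n. sets (\<mu>s n) = sets borel" "\<And>n. sets (\<nu>s n) = sets borel"
    unfolding radon_def by auto
  have tents: "tent_conv \<mu>s \<mu>" "tent_conv \<nu>s \<nu>"
    using conv conv_tem_imp_tent_conv conv_rap_imp_tent_conv by blast+
  have "liminf (\<lambda>n. Rsup (\<mu>s n)) \<le> liminf (\<lambda>n. Linf (\<nu>s n))"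
    using order by (intro Liminf_mono) auto
  also have "\<dots> \<le> limsup (\<lambda>n. Linf (\<nu>s n))" by (rule Liminf_le_Limsup) simp
  finally show ?thesis
    using Rsup_le_liminf[OF sets(1) radon(3) tents(1)] limsup_le_Linf[OF sets(2) radon(4) tents(2)]
    by simp
qed

end
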